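(* Let $G$ be a connected graph with $n\ge 2$ vertices and let $\varepsilon\ge 0$. If $G$ has at least $\varepsilon n$ bad vertices, then the graphic TSP cost of $G$ is at least $(1+\varepsilon)n-2$.
   Context: A vertex is bad if it has degree $1$, or it has degree $2$ and is an articulation point (a vertex whose removal increases the number of connected components). For a connected unweighted undirected graph $G=(V,E)$ with $n\ge 2$ vertices, the graphic TSP cost is $\min \sum_{i=1}^{n} d_G(v_i,v_{i+1})$ over cyclic orderings $(v_1,\dots,v_n)$ of $V$ ($v_{n+1}=v_1$), where $d_G$ is shortest-path distance. *)

theory Defs
  imports Complex_Main
begin

definition simple_graph :: "'a set \<Rightarrow> ('a \<Rightarrow> 'a \<Rightarrow> bool) \<Rightarrow> bool" where
  "simple_graph V E \<longleftrightarrow> finite V \<and> (\<forall>u v. E u v \<longrightarrow> E v u) \<and> (\<forall>v. \<not> E v v)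
      \<and> (\<forall>u v. E u v \<longrightarrow> u \<in> V \<and> v \<in> V)"

definition is_walk :: "'a set \<Rightarrow> ('a \<Rightarrow> 'a \<Rightarrow> bool) \<Rightarrow> 'a list \<Rightarrow> bool" where
  "is_walk W E p \<longleftrightarrow> p \<noteq> [] \<and> set p \<subseteq> W \<and> (\<forall>i. Suc i < length p \<longrightarrow> E (p ! i) (p ! Suc i))"

definition reachable :: "'a set \<Rightarrow> ('a \<Rightarrow> 'a \<Rightarrow> bool) \<Rightarrow> 'a \<Rightarrow> 'a \<Rightarrow> bool" where
  "reachable W E u v \<longleftrightarrow> (\<exists>p. is_walk W E p \<and> hd p = u \<and> last p = v)"

definition connected_graph :: "'a set \<Rightarrow> ('a \<Rightarrow> 'a \<Rightarrow> bool) \<Rightarrow> bool" where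
  "connected_graph V E \<longleftrightarrow> V \<noteq> {} \<and> (\<forall>u\<in>V. \<forall>v\<in>V. reachable V E u v)"

definition components :: "'a set \<Rightarrow> ('a \<Rightarrow> 'a \<Rightarrow> bool) \<Rightarrow> 'a set set" where
  "components W E = (\<lambda>v. {u \<in> W. reachable W E v u}) ` W"

definition num_components :: "'a set \<Rightarrow> ('a \<Rightarrow> 'a \<Rightarrow> bool) \<Rightarrow> nat" where
  "num_components W E = card (components W E)"

definition articulation_point :: "'a set \<Rightarrow> ('a \<Rightarrow> 'a \<Rightarrow> bool) \<Rightarrow> 'a \<Rightarrow> bool" where
  "articulation_point V E v \<longleftrightarrow> v \<in> V \<and> num_components (V - {v}) E > num_components V E"

definition degree :: "'a set \<Rightarrow> ('a \<Rightarrow> 'a \<Rightarrow> bool) \<Rightarrow> 'a \<Rightarrow> nat" where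
  "degree V E v = card {u \<in> V. E v u}"

definition bad_vertex :: "'a set \<Rightarrow> ('a \<Rightarrow> 'a \<Rightarrow> bool) \<Rightarrow> 'a \<Rightarrow> bool" where
  "bad_vertex V E v \<longleftrightarrow> v \<in> V \<and>
     (degree V E v = 1 \<or> (degree V E v = 2 \<and> articulation_point V E v))"

definition dist :: "'a set \<Rightarrow> ('a \<Rightarrow> 'a \<Rightarrow> bool) \<Rightarrow> 'a \<Rightarrow> 'a \<Rightarrow> nat" where
  "dist V E u v = (LEAST k. \<exists>p. is_walk V E p \<and> hd p = u \<and> last p = v \<and> length p = Suc k)"

definition tour_cost :: "'a set \<Rightarrow> ('a \<Rightarrow> 'a \<Rightarrow> bool) \<Rightarrow> 'a list \<Rightarrow> nat" where
  "tour_cost V E xs = (\<Sum>i<length xs. dist V E (xs ! i) (xs ! (Suc i mod length xs)))"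

definition graphic_tsp :: "'a set \<Rightarrow> ('a \<Rightarrow> 'a \<Rightarrow> bool) \<Rightarrow> nat" where
  "graphic_tsp V E = Min {tour_cost V E xs | xs. distinct xs \<and> set xs = V}"

end

theory Submission
  imports Defs
begin

text \<open>Follow an optimal tour through shortest paths: this gives a closed walk with \<open>tsp\<close> steps
  that visits every vertex. Let \<open>D\<close> be the set of distinct edges it uses; since it
  visits all \<open>n\<close> vertices, \<open>|D| \<ge> n - 1\<close>. Every bad vertex \<open>v\<close> is incident only to bridges, and a
  closed walk crosses a bridge at least twice. Orienting every vertex other than a root \<open>r\<close>
  towards \<open>r\<close> along a neighbour closer to \<open>r\<close> assigns distinct edges to distinct vertices, so at
  least \<open>|bad| - 1\<close> edges of \<open>D\<close> are traversed twice. Hence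
  \<open>tsp \<ge> |D| + (|bad| - 1) \<ge> n + |bad| - 2\<close>.\<close>

lemma is_walk_iff_successively:
  "is_walk W E p \<longleftrightarrow> p \<noteq> [] \<and> set p \<subseteq> W \<and> successively E p"
  unfolding is_walk_def successively_conv_nth by blast

lemma reachable_refl: "x \<in> W \<Longrightarrow> reachable W E x x"
  unfolding reachable_def by (rule exI[of _ "[x]"]) (simp add: is_walk_iff_successively)

lemma reachable_snoc:
  assumes "reachable W E a x" "E x y" "y \<in> W"
  shows "reachable W E a y"
proof -
  obtain p where p: "is_walk W E p" "hd p = a" "last p = x"
    using assms(1) unfolding reachable_def by blast
  then have "is_walk W E (p @ [y]) \<and> hd (p @ [y]) = a \<and> last (p @ [y]) = y"
    using assms(2,3) by (auto simp: is_walk_iff_successively successively_append_iff)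
  then show ?thesis unfolding reachable_def by blast
qed

lemma is_walk_append:
  assumes "is_walk W E p" "is_walk W E q" "last p = hd q"
  shows "is_walk W E (p @ tl q)" "hd (p @ tl q) = hd p" "last (p @ tl q) = last q"
    "length (p @ tl q) = length p + length q - 1" "set (p @ tl q) = set p \<union> set q"
proof -
  obtain t where q: "q = last p # t"
    using assms(2,3) by (cases q) (auto simp: is_walk_iff_successively)
  have p: "p \<noteq> []" "set p \<subseteq> W" "successively E p"
    using assms(1) by (simp_all add: is_walk_iff_successively)
  have t: "set t \<subseteq> W" "successively E (last p # t)"
    using assms(2) q by (simp_all add: is_walk_iff_successively)
  show "is_walk W E (p @ tl q)"
    using p t q by (cases t) (simp_all add: is_walk_iff_successively successively_append_iff)
  show "hd (p @ tl q) = hd p" "length (p @ tl q) = length p + length q - 1"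
    using p q by simp_all
  show "last (p @ tl q) = last q"
    using p q by (cases t) simp_all
  show "set (p @ tl q) = set p \<union> set q"
    using p q by (auto simp: last_in_set)
qed

lemma reachable_trans:
  "reachable W E a b \<Longrightarrow> reachable W E b c \<Longrightarrow> reachable W E a c"
  using is_walk_append unfolding reachable_def by metis

lemma reachable_sym:
  assumes "\<forall>x y. E x y \<longrightarrow> E y x" "reachable W E a b"
  shows "reachable W E b a"
proof -
  obtain p where p: "is_walk W E p" "hd p = a" "last p = b"
    using assms(2) unfolding reachable_def by blast
  then have "is_walk W E (rev p) \<and> hd (rev p) = b \<and> last (rev p) = a"
    using assms(1) by (auto simp: is_walk_iff_successively hd_rev last_rev elim: successively_mono)
  then show ?thesis unfolding reachable_def by blast
qed

lemma reachable_neighbour_avoiding: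
  "is_walk W E p \<Longrightarrow> last p = v \<Longrightarrow> hd p \<noteq> v \<Longrightarrow> \<exists>y. E y v \<and> reachable (W - {v}) E (hd p) y"
proof (induction p)
  case Nil
  then show ?case by (simp add: is_walk_iff_successively)
next
  case (Cons x q)
  then have "q \<noteq> []" by auto
  then have q: "is_walk W E q" "last q = v" and x: "x \<in> W - {v}" "E x (hd q)"
    using Cons.prems by (auto simp: is_walk_iff_successively successively_Cons)
  show ?case
  proof (cases "hd q = v")
    case True
    then show ?thesis using x by (auto intro: reachable_refl)
  next
    case False
    then obtain y where y: "E y v" "reachable (W - {v}) E (hd q) y"
      using Cons.IH q by blast
    have "hd q \<in> W - {v}" using q False by (auto simp: is_walk_iff_successively)
    then have "reachable (W - {v}) E x (hd q)"
      using reachable_snoc[OF reachable_refl[OF x(1), of E] x(2)] by blast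
    then show ?thesis using y reachable_trans by fastforce
  qed
qed

lemma components_of_connected:
  "connected_graph V E \<Longrightarrow> components V E = {V}"
  unfolding connected_graph_def components_def by auto

lemma num_components_le_one:
  assumes sym: "\<forall>x y. E x y \<longrightarrow> E y x" and c: "\<forall>w\<in>W. reachable W E w c"
  shows "num_components W E \<le> 1"
proof -
  have "components W E \<subseteq> {{x \<in> W. reachable W E c x}}"
  proof
    fix K assume "K \<in> components W E"
    then obtain w where w: "w \<in> W" "K = {x \<in> W. reachable W E w x}"
      unfolding components_def by blast
    have "reachable W E w x \<longleftrightarrow> reachable W E c x" for x
      using c w(1) reachable_sym[OF sym] reachable_trans by metis
    then show "K \<in> {{x \<in> W. reachable W E c x}}" using w(2) by simp
  qed
  then show ?thesis
    unfolding num_components_def using card_mono[of "{_}"] by fastforce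
qed

lemma degree_two_articulation_point_separates:
  assumes sg: "simple_graph V E" and cg: "connected_graph V E"
    and N: "{w \<in> V. E v w} = {u, c}" and ap: "articulation_point V E v"
  shows "\<not> reachable (V - {v}) E c u"
proof
  assume cu: "reachable (V - {v}) E c u"
  have sym: "\<forall>x y. E x y \<longrightarrow> E y x" and inV: "\<forall>x y. E x y \<longrightarrow> x \<in> V \<and> y \<in> V"
    using sg unfolding simple_graph_def by blast+
  have uc: "reachable (V - {v}) E u c" using reachable_sym[OF sym cu] .
  have "reachable (V - {v}) E w c" if w: "w \<in> V - {v}" for w
  proof -
    obtain p where p: "is_walk V E p" "hd p = w" "last p = v"
      using cg w ap unfolding connected_graph_def reachable_def articulation_point_def by blast
    then obtain y where y: "E y v" "reachable (V - {v}) E w y"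
      using reachable_neighbour_avoiding w by fastforce
    have "y \<in> {w \<in> V. E v w}" using y(1) sym inV by blast
    then consider "y = u" | "y = c" using N by blast
    then show ?thesis
      by cases (use y(2) reachable_trans[OF _ uc] in simp_all)
  qed
  then have "num_components (V - {v}) E \<le> 1" by (intro num_components_le_one[OF sym]) blast
  moreover have "num_components V E = 1"
    unfolding num_components_def components_of_connected[OF cg] by simp
  ultimately show False using ap unfolding articulation_point_def by simp
qed

text \<open>With \<open>E\<close> symmetric, \<open>bridge E v u\<close> says that \<open>{v, u}\<close> is the only edge between some
  vertex set \<open>A \<ni> v\<close> and its complement \<open>\<ni> u\<close>.\<close>

definition bridge :: "('a \<Rightarrow> 'a \<Rightarrow> bool) \<Rightarrow> 'a \<Rightarrow> 'a \<Rightarrow> bool" where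
  "bridge E v u \<longleftrightarrow> (\<exists>A. v \<in> A \<and> u \<notin> A \<and> (\<forall>x y. x \<in> A \<longrightarrow> y \<notin> A \<longrightarrow> E x y \<longrightarrow> x = v \<and> y = u))"

lemma bad_vertex_bridge:
  assumes sg: "simple_graph V E" and cg: "connected_graph V E"
    and bad: "bad_vertex V E v" and Evu: "E v u"
  shows "bridge E v u"
proof -
  have irr: "\<forall>x. \<not> E x x" and inV: "\<forall>x y. E x y \<longrightarrow> x \<in> V \<and> y \<in> V"
    using sg unfolding simple_graph_def by blast+
  have u: "u \<in> {w \<in> V. E v w}" using Evu inV by blast
  consider (leaf) "degree V E v = 1" | (cut) "degree V E v = 2" "articulation_point V E v"
    using bad unfolding bad_vertex_def by blast
  then show ?thesis
  proof cases
    case leaf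
    then obtain z where "{w \<in> V. E v w} = {z}"
      unfolding degree_def by (rule card_1_singletonE)
    then have N: "{w \<in> V. E v w} = {u}" using u by simp
    have "x = v \<and> y = u" if "x \<in> {v}" "y \<notin> {v}" "E x y" for x y
      using that inV N by blast
    moreover have "u \<notin> {v}" using Evu irr by auto
    ultimately show ?thesis unfolding bridge_def by blast
  next
    case cut
    then obtain a b where "{w \<in> V. E v w} = {a, b}"
      unfolding degree_def card_2_iff by blast
    then obtain c where N: "{w \<in> V. E v w} = {u, c}"
      using u by (metis insert_commute insertE singletonD)
    have cV: "c \<in> V - {v}" using N irr by blast
    have sep: "\<not> reachable (V - {v}) E c u"
      using degree_two_articulation_point_separates[OF sg cg N cut(2)] .
    define A where "A = insert v {x. reachable (V - {v}) E c x}"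
    have "x = v \<and> y = u" if "x \<in> A" "y \<notin> A" "E x y" for x y
    proof (cases "x = v")
      case True
      have "c \<in> A" unfolding A_def using reachable_refl[OF cV] by simp
      then have "y \<in> {u, c} - {c}" using that True N inV by blast
      then show ?thesis using True by blast
    next
      case False
      then have "reachable (V - {v}) E c x" using that(1) unfolding A_def by simp
      moreover have "y \<in> V - {v}" using that inV unfolding A_def by auto
      ultimately have "y \<in> A"
        using reachable_snoc[of "V - {v}" E c x y] that(3) unfolding A_def by simp
      then show ?thesis using that(2) by contradiction
    qed
    moreover have "v \<in> A" "u \<notin> A" using sep Evu irr unfolding A_def by auto
    ultimately show ?thesis unfolding bridge_def by blast
  qed
qed

lemma shortest_walk_exists:
  assumes "reachable V E a b"
  shows "\<exists>p. is_walk V E p \<and> hd p = a \<and> last p = b \<and> length p = Suc (dist V E a b)"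
proof -
  obtain p where "is_walk V E p" "hd p = a" "last p = b"
    using assms unfolding reachable_def by blast
  then have "\<exists>k p. is_walk V E p \<and> hd p = a \<and> last p = b \<and> length p = Suc k"
    by (metis Suc_pred is_walk_def length_greater_0_conv)
  then show ?thesis unfolding dist_def by (rule LeastI_ex)
qed

lemma dist_le_walk_length:
  "is_walk V E p \<Longrightarrow> dist V E (hd p) (last p) \<le> length p - 1"
  unfolding dist_def by (rule Least_le) (auto simp: is_walk_iff_successively)

lemma exists_neighbour_closer:
  assumes "connected_graph V E" "v \<in> V" "r \<in> V" "v \<noteq> r"
  shows "\<exists>u. E v u \<and> dist V E u r < dist V E v r"
proof -
  have "reachable V E v r" using assms(1-3) unfolding connected_graph_def by simp
  then obtain p where p: "is_walk V E p" "hd p = v" "last p = r" "length p = Suc (dist V E v r)"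
    by (auto dest: shortest_walk_exists)
  obtain q where q: "p = v # q" using p(1,2) by (cases p) (simp_all add: is_walk_iff_successively)
  then have "q \<noteq> []" using p(3) assms(4) by auto
  then have "is_walk V E q" "E v (hd q)" "last q = r" "length q = dist V E v r"
    using p q by (auto simp: is_walk_iff_successively successively_Cons)
  moreover have "dist V E (hd q) r < dist V E v r"
    using dist_le_walk_length[OF \<open>is_walk V E q\<close>] \<open>q \<noteq> []\<close> calculation
    by (cases q) auto
  ultimately show ?thesis by blast
qed

lemma nat_crossing:
  fixes P :: "nat \<Rightarrow> bool"
  assumes "P a" "\<not> P b" "a < b"
  shows "\<exists>k. a \<le> k \<and> k < b \<and> P k \<and> \<not> P (Suc k)"
  using assms
proof (induction b)
  case 0
  then show ?case by simp
next
  case (Suc b)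
  show ?case
  proof (cases "P b")
    case True
    then show ?thesis using Suc.prems by (intro exI[of _ b]) (simp add: less_Suc_eq_le)
  next
    case False
    then have "a < b" using Suc.prems by (cases "a = b") (simp_all add: less_Suc_eq)
    then show ?thesis using Suc.IH[OF Suc.prems(1) False] less_SucI by blast
  qed
qed

lemma closed_list_exit:
  assumes closed: "hd p = last p" and x: "x \<in> set p" "P x" and y: "y \<in> set p" "\<not> P y"
  shows "\<exists>k. Suc k < length p \<and> P (p ! k) \<and> \<not> P (p ! Suc k)"
proof (cases "P (p ! 0)")
  case True
  obtain j where j: "j < length p" "p ! j = y" using y(1) by (auto simp: in_set_conv_nth)
  then have "0 < j" using True y(2) by (cases j) auto
  then obtain k where "k < j" "P (p ! k)" "\<not> P (p ! Suc k)"
    using nat_crossing[of "\<lambda>k. P (p ! k)" 0 j] True j y(2) by auto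
  then show ?thesis using j(1) by (intro exI[of _ k]) simp
next
  case False
  have "p \<noteq> []" using x by auto
  then have last: "p ! (length p - 1) = p ! 0"
    using closed by (simp add: hd_conv_nth last_conv_nth)
  obtain i where i: "i < length p" "p ! i = x" using x(1) by (auto simp: in_set_conv_nth)
  then have "i < length p - 1" using False last x(2) by (cases "i = length p - 1") auto
  then obtain k where "k < length p - 1" "P (p ! k)" "\<not> P (p ! Suc k)"
    using nat_crossing[of "\<lambda>k. P (p ! k)" i "length p - 1"] False last i x(2) by auto
  then show ?thesis by (intro exI[of _ k]) simp
qed

definition walk_edges :: "'a list \<Rightarrow> 'a set set" where
  "walk_edges p = (\<lambda>i. {p ! i, p ! Suc i}) ` {..<length p - 1}"

definition edge_multiplicity :: "'a list \<Rightarrow> 'a set \<Rightarrow> nat" where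
  "edge_multiplicity p e = card {i \<in> {..<length p - 1}. {p ! i, p ! Suc i} = e}"

lemma finite_walk_edges: "finite (walk_edges p)"
  unfolding walk_edges_def by (rule finite_imageI) simp

lemma edge_multiplicity_pos_iff: "0 < edge_multiplicity p e \<longleftrightarrow> e \<in> walk_edges p"
  unfolding edge_multiplicity_def walk_edges_def card_gt_0_iff by auto

lemma walk_edges_Cons:
  assumes "q \<noteq> []"
  shows "walk_edges (x # q) = insert {x, hd q} (walk_edges q)"
proof -
  have "{..<length (x # q) - 1} = insert 0 (Suc ` {..<length q - 1})"
    using assms lessThan_Suc_eq_insert_0[of "length q - 1"] by simp
  then show ?thesis
    using assms unfolding walk_edges_def by (simp add: image_image hd_conv_nth)
qed

lemma walk_edges_subset_set: "e \<in> walk_edges p \<Longrightarrow> e \<subseteq> set p"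
  unfolding walk_edges_def by auto

lemma card_set_le_card_walk_edges:
  "p \<noteq> [] \<Longrightarrow> card (set p) \<le> card (walk_edges p) + 1"
proof (induction p)
  case Nil
  then show ?case by simp
next
  case (Cons x q)
  consider "q = []" | "q \<noteq> []" "x \<in> set q" | "q \<noteq> []" "x \<notin> set q" by blast
  then show ?case
  proof cases
    case 1
    then show ?thesis by simp
  next
    case 2
    then have "card (walk_edges q) \<le> card (walk_edges (x # q))"
      using walk_edges_Cons card_insert_le finite_walk_edges by metis
    then show ?thesis using 2 Cons.IH by (simp add: insert_absorb)
  next
    case 3
    then have "{x, hd q} \<notin> walk_edges q" using walk_edges_subset_set by blast
    then show ?thesis using 3 Cons.IH finite_walk_edges[of q] by (simp add: walk_edges_Cons)
  qed
qed

lemma sum_edge_multiplicity: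
  "(\<Sum>e\<in>walk_edges p. edge_multiplicity p e) = length p - 1"
proof -
  have "length p - 1 = (\<Sum>i<length p - 1. 1)" by simp
  also have "\<dots> = (\<Sum>e\<in>walk_edges p. edge_multiplicity p e)"
    unfolding walk_edges_def edge_multiplicity_def by (subst sum.image_gen) simp_all
  finally show ?thesis by simp
qed

lemma closed_walk_traverses_bridge_twice:
  assumes sym: "\<forall>x y. E x y \<longrightarrow> E y x" and walk: "successively E p" and closed: "hd p = last p"
    and "v \<in> set p" "u \<in> set p" and "bridge E v u"
  shows "2 \<le> edge_multiplicity p {v, u}"
proof -
  obtain A where A: "v \<in> A" "u \<notin> A" "\<And>x y. x \<in> A \<Longrightarrow> y \<notin> A \<Longrightarrow> E x y \<Longrightarrow> x = v \<and> y = u"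
    using \<open>bridge E v u\<close> unfolding bridge_def by blast
  obtain k where k: "Suc k < length p" "p ! k \<in> A" "p ! Suc k \<notin> A"
    using closed_list_exit[OF closed \<open>v \<in> set p\<close> A(1) \<open>u \<in> set p\<close> A(2)] by blast
  obtain k' where k': "Suc k' < length p" "p ! k' \<notin> A" "p ! Suc k' \<in> A"
    using closed_list_exit[OF closed \<open>u \<in> set p\<close>, of "\<lambda>x. x \<notin> A" v]
      \<open>v \<in> set p\<close> A(1,2) by blast
  have "E (p ! Suc k') (p ! k')" using successively_nth[OF walk k'(1)] sym by blast
  then have "p ! Suc k' = v \<and> p ! k' = u" using A(3) k'(2,3) by blast
  moreover have "p ! k = v \<and> p ! Suc k = u"
    using A(3) k(2,3) successively_nth[OF walk k(1)] by blast
  ultimately have "{k, k'} \<subseteq> {i \<in> {..<length p - 1}. {p ! i, p ! Suc i} = {v, u}}"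
    using k(1) k'(1) by auto
  then have "card {k, k'} \<le> edge_multiplicity p {v, u}"
    unfolding edge_multiplicity_def by (intro card_mono) simp_all
  moreover have "k \<noteq> k'" using k(2) k'(2) by auto
  ultimately show ?thesis by simp
qed

lemma card_plus_card_ge2_le_sum:
  fixes f :: "'a \<Rightarrow> nat"
  assumes "finite D" "\<forall>e\<in>D. 1 \<le> f e"
  shows "card D + card {e \<in> D. 2 \<le> f e} \<le> sum f D"
proof -
  have "card D + card {e \<in> D. 2 \<le> f e} = (\<Sum>e\<in>D. 1 + of_bool (2 \<le> f e))"
    using assms(1) by (subst sum.distrib) (simp add: Int_def)
  also have "\<dots> \<le> sum f D"
    using assms(2) by (intro sum_mono) auto
  finally show ?thesis .
qed

lemma inj_on_edges_to_closer:
  fixes h :: "'a \<Rightarrow> nat"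
  assumes "\<forall>v\<in>S. h (f v) < h v"
  shows "inj_on (\<lambda>v. {v, f v}) S"
proof (rule inj_onI)
  fix x y assume "x \<in> S" "y \<in> S" "{x, f x} = {y, f y}"
  then show "x = y" using assms by (metis doubleton_eq_iff less_asym)
qed

lemma card_walk_edges_plus_card_repeated_le:
  "card (walk_edges p) + card {e \<in> walk_edges p. 2 \<le> edge_multiplicity p e} \<le> length p - 1"
proof -
  have "\<forall>e\<in>walk_edges p. 1 \<le> edge_multiplicity p e"
    by (simp add: Suc_le_eq edge_multiplicity_pos_iff)
  then show ?thesis
    using card_plus_card_ge2_le_sum[OF finite_walk_edges] sum_edge_multiplicity by metis
qed

lemma card_bad_vertices_le_card_repeated_edges:
  assumes sg: "simple_graph V E" and cg: "connected_graph V E"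
    and walk: "is_walk V E p" and closed: "hd p = last p" and spanning: "set p = V"
    and r: "r \<in> V"
  shows "card ({v \<in> V. bad_vertex V E v} - {r})
    \<le> card {e \<in> walk_edges p. 2 \<le> edge_multiplicity p e}"
proof -
  have sym: "\<forall>x y. E x y \<longrightarrow> E y x" and inV: "\<forall>x y. E x y \<longrightarrow> x \<in> V \<and> y \<in> V"
    using sg unfolding simple_graph_def by blast+
  have "\<forall>v\<in>V - {r}. \<exists>u. E v u \<and> dist V E u r < dist V E v r"
    using exists_neighbour_closer[OF cg _ r] by blast
  then obtain nxt where nxt: "\<forall>v\<in>V - {r}. E v (nxt v) \<and> dist V E (nxt v) r < dist V E v r"
    by (metis bchoice)
  let ?Bad = "{v \<in> V. bad_vertex V E v} - {r}"
  let ?M = "{e \<in> walk_edges p. 2 \<le> edge_multiplicity p e}"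
  have "(\<lambda>v. {v, nxt v}) ` ?Bad \<subseteq> ?M"
  proof
    fix e assume "e \<in> (\<lambda>v. {v, nxt v}) ` ?Bad"
    then obtain v where v: "v \<in> V - {r}" "bad_vertex V E v" "e = {v, nxt v}" by blast
    have E: "E v (nxt v)" using nxt v(1) by blast
    then have "nxt v \<in> set p" using inV spanning by blast
    then have "2 \<le> edge_multiplicity p e"
      using closed_walk_traverses_bridge_twice[OF sym _ closed _ _ bad_vertex_bridge[OF sg cg v(2) E]]
        walk v(1,3) spanning by (auto simp: is_walk_iff_successively)
    then show "e \<in> ?M" using edge_multiplicity_pos_iff[of p e] by simp
  qed
  moreover have "inj_on (\<lambda>v. {v, nxt v}) ?Bad"
    using nxt by (intro inj_on_edges_to_closer) auto
  moreover have "finite ?M" using finite_walk_edges[of p] by simp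
  ultimately show ?thesis using card_inj_on_le by blast
qed

lemma closed_spanning_walk_bound:
  assumes sg: "simple_graph V E" and "connected_graph V E"
    and walk: "is_walk V E p" and "hd p = last p" and spanning: "set p = V"
  shows "card {v \<in> V. bad_vertex V E v} + card V \<le> length p + 1"
proof -
  define Bad where "Bad = {v \<in> V. bad_vertex V E v}"
  have p: "p \<noteq> []" using walk by (simp add: is_walk_iff_successively)
  then have r: "hd p \<in> V" using spanning by auto
  have "finite Bad" using sg unfolding Bad_def simple_graph_def by simp
  then have "card Bad \<le> card (Bad - {hd p}) + 1"
    using card_Suc_Diff1 by (cases "hd p \<in> Bad") fastforce+
  moreover have "card (Bad - {hd p}) + card (walk_edges p) \<le> length p - 1"
    using card_bad_vertices_le_card_repeated_edges[OF assms r]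
      card_walk_edges_plus_card_repeated_le[of p] unfolding Bad_def by linarith
  moreover have "card V \<le> card (walk_edges p) + 1"
    using card_set_le_card_walk_edges[OF p] spanning by simp
  moreover have "1 \<le> length p" using p by (simp add: Suc_le_eq)
  ultimately show ?thesis unfolding Bad_def by linarith
qed

lemma tour_prefix_walk:
  assumes cg: "connected_graph V E" and xs: "set xs = V" "xs \<noteq> []"
  shows "m \<le> length xs \<Longrightarrow> \<exists>p. is_walk V E p \<and> hd p = xs ! 0 \<and> last p = xs ! (m mod length xs)
     \<and> length p = Suc (\<Sum>i<m. dist V E (xs ! i) (xs ! (Suc i mod length xs)))
     \<and> set (take m xs) \<subseteq> set p"
proof (induction m)
  case 0
  have "xs ! 0 \<in> V" using xs by auto
  then show ?case by (intro exI[of _ "[xs ! 0]"]) (auto simp: is_walk_iff_successively)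
next
  case (Suc m)
  let ?a = "xs ! m" and ?b = "xs ! (Suc m mod length xs)"
  obtain p where p: "is_walk V E p" "hd p = xs ! 0" "last p = ?a"
     "length p = Suc (\<Sum>i<m. dist V E (xs ! i) (xs ! (Suc i mod length xs)))"
     "set (take m xs) \<subseteq> set p"
    using Suc by auto
  have "?a \<in> V" "?b \<in> V" using Suc.prems xs by auto
  then obtain q where q: "is_walk V E q" "hd q = ?a" "last q = ?b" "length q = Suc (dist V E ?a ?b)"
    using cg unfolding connected_graph_def by (blast dest: shortest_walk_exists)
  have "set (take (Suc m) xs) = insert ?a (set (take m xs))"
    using Suc.prems by (simp add: take_Suc_conv_app_nth)
  moreover have "?a \<in> set p"
    using p(1,3) last_in_set[of p] by (simp add: is_walk_iff_successively)
  ultimately show ?case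
    using is_walk_append[OF p(1) q(1)] p q by (intro exI[of _ "p @ tl q"]) auto
qed

lemma tour_closed_walk:
  assumes "connected_graph V E" "set xs = V" "xs \<noteq> []"
  shows "\<exists>p. is_walk V E p \<and> hd p = last p \<and> set p = V \<and> length p = Suc (tour_cost V E xs)"
proof -
  obtain p where "is_walk V E p" "hd p = xs ! 0" "last p = xs ! 0"
     "length p = Suc (tour_cost V E xs)" "set xs \<subseteq> set p"
    using tour_prefix_walk[OF assms, of "length xs"] unfolding tour_cost_def by auto
  then show ?thesis using assms(2) by (auto simp: is_walk_iff_successively)
qed

lemma graphic_tsp_attained:
  assumes "finite V"
  shows "\<exists>xs. distinct xs \<and> set xs = V \<and> graphic_tsp V E = tour_cost V E xs"
proof -
  let ?S = "{tour_cost V E xs | xs. distinct xs \<and> set xs = V}"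
  have "?S \<subseteq> tour_cost V E ` {xs. set xs \<subseteq> V \<and> distinct xs}" by auto
  then have "finite ?S" using finite_subset_distinct[OF assms] finite_subset by blast
  moreover have "?S \<noteq> {}" using finite_distinct_list[OF assms] by blast
  ultimately have "graphic_tsp V E \<in> ?S" unfolding graphic_tsp_def by (rule Min_in)
  then show ?thesis by blast
qed

theorem mainTheorem12:
  fixes V :: "'a set" and E :: "'a \<Rightarrow> 'a \<Rightarrow> bool" and \<epsilon> :: real
  assumes "simple_graph V E"
    and "connected_graph V E"
    and "card V \<ge> 2"
    and "\<epsilon> \<ge> 0"
    and "real (card {v \<in> V. bad_vertex V E v}) \<ge> \<epsilon> * real (card V)"
  shows "real (graphic_tsp V E) \<ge> (1 + \<epsilon>) * real (card V) - 2"
proof -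
  obtain xs where xs: "distinct xs" "set xs = V" "graphic_tsp V E = tour_cost V E xs"
    using graphic_tsp_attained assms(1) unfolding simple_graph_def by blast
  then have "xs \<noteq> []" using assms(3) by auto
  then obtain p where "is_walk V E p" "hd p = last p" "set p = V"
      "length p = Suc (graphic_tsp V E)"
    using tour_closed_walk[OF assms(2) xs(2)] xs(3) by auto
  then have "card {v \<in> V. bad_vertex V E v} + card V \<le> graphic_tsp V E + 2"
    using closed_spanning_walk_bound[OF assms(1,2)] by fastforce
  then show ?thesis using assms(5) by (simp add: algebra_simps)
qed

end
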